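(* Let $\gamma$ be an Ehresmann connection on $M\times_NC$ whose $C$-component $\gamma_C$ is defined on $C$ (i.e. its components $\gamma^i_{jkl}$ are functions on $C$). Then the equations $\tilde\gamma_C=R^{\nabla^{(1)}}$ and $\mathrm{alt}_{12}\circ\gamma_C=\nabla^{(2)}\tau_N$ are locally equivalent to the equations $$\gamma^h_{str}-\gamma^h_{rts}=A^h_{rm}A^m_{st}-A^h_{sm}A^m_{rt},$$ $$\gamma^h_{rst}-\gamma^h_{srt}=A^h_{tm}(A^m_{rs}-A^m_{sr})+A^m_{ts}(A^h_{mr}-A^h_{rm})+A^m_{tr}(A^h_{sm}-A^h_{ms}),$$ for all indices $h,r,s,t$.
   Context: $N$ is a connected oriented $n$-manifold, $p_M\colon M\to N$ the bundle of pseudo-Riemannian metrics of a fixed signature, $p_C\colon C\to N$ the bundle of linear connections (fibre over $x$: values $\Gamma_x$ of linear connections at $x$), an affine bundle modelled on $\otimes^2T^*N\otimes TN$, so $V(p_C)\cong p_C^*(\otimes^2T^*N\otimes TN)$. Summation over repeated indices. A chart $(x^i)$ induces coordinates $(x^i,y_{ij})$ on $M$ and $(x^i,A^i_{jk})$ on $C$, $A^i_{jk}(\Gamma_x)=\Gamma^i_{jk}(x)$ (Christoffel symbols, $\nabla_{\partial_j}\partial_k=\Gamma^i_{jk}\partial_i$). An Ehresmann connection on $M\times_NC\to N$ is locally $\gamma=\sum_{i\le j}(dy_{ij}+\gamma_{ijk}dx^k)\otimes\partial/\partial y_{ij}+(dA^i_{jk}+\gamma^i_{jkl}dx^l)\otimes\partial/\partial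 A^i_{jk}$; its $C$-component is $\gamma_C=(dA^i_{jk}+\gamma^i_{jkl}dx^l)\otimes\partial/\partial A^i_{jk}$, viewed when defined on $C$ as a homomorphism $TC\to p_C^*(\otimes^2T^*N\otimes TN)$, $\gamma_C=(dA^i_{jk}+\gamma^i_{jkl}dx^l)\otimes dx^j\otimes dx^k\otimes\partial/\partial x^i$. The 2-form $\tilde\gamma_C$ on $C$ with values in $p_C^*(T^*N\otimes TN)$ is $\tilde\gamma_C(X,Y)=c^1_1((p_C)_*Y\otimes\gamma_C(X))-c^1_1((p_C)_*X\otimes\gamma_C(Y))$, where $c^1_1(X_1\otimes w_1\otimes w_2\otimes X_2)=w_1(X_1)\,w_2\otimes X_2$. For a tensorial vector bundle $E\to N$, the canonical covariant derivative $\nabla^E$ on $p_C^*E$ is determined by $((\nabla^E)_X(f\xi))(\Gamma_x)=(Xf)(\Gamma_x)\xi(x)+f(\Gamma_x)(\nabla^{\Gamma_x}_{(p_C)_*X}\xi)(x)$ for $X\in T_{\Gamma_x}C$, $f\in C^\infty(C)$, $\xi$ a local section of $E$, where $\nabla^{\Gamma_x}$ is the covariant derivative induced on $E$ by (any linear connection with value) $\Gamma_x$. $\nabla^{(1)}=\nabla^{E_1}$ with $E_1=TN$, $R^{\nabla^{(1)}}$ its curvature (a 2-form on $C$ with values in $p_C^*(T^*N\otimes TN)$), and $\nabla^{(2)}=\nabla^{E_2}$ with $E_2=\wedge^2T^*N\otimes TN$. $\tau_N$ is the section of $p_C^*(\wedge^2T^*N\otimes TN)$ given by $\tau_N(\Gamma_x)=$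 torsion of $\Gamma_x$; locally $\tau_N=\sum_{j<k}(A^i_{jk}-A^i_{kj})dx^j\wedge dx^k\otimes\partial/\partial x^i$. $\mathrm{alt}_{12}\colon\otimes^2T^*N\otimes TN\to\wedge^2T^*N\otimes TN$ alternates the two covariant arguments. *)

theory Defs
  imports "HOL-Analysis.Analysis"
begin

text \<open>Local model in a chart (x^i) of N with induced coordinates (x^i, A^i_jk) on C.
  A point of C over the chart is a pair (x, A) with x \<in> R^n and A $ i $ j $ k = A^i_jk.
  Tangent vectors to C at a point are pairs (v, a) in the same space
  (v $ l = dx^l(X), a $ i $ j $ k = dA^i_jk(X)).
  An element of T*N (x) TN is represented by T with T $ i $ k = coefficient of dx^k (x) d/dx^i;
  an element of (x)^2 T*N (x) TN by T with T $ i $ j $ k = coefficient of dx^j (x) dx^k (x) d/dx^i.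
  A section of p_C^* TN is a map C \<Rightarrow> R^n (components along d/dx^i).\<close>

type_synonym 'n cpt = "(real^'n) \<times> (real^'n^'n^'n)"

definition dd :: "('a::real_normed_vector \<Rightarrow> 'b::real_normed_vector) \<Rightarrow> 'a \<Rightarrow> 'a \<Rightarrow> 'b" where
  "dd f v = (\<lambda>P. frechet_derivative f (at P) v)"

definition smooth_on :: "'a::real_normed_vector set \<Rightarrow> ('a \<Rightarrow> 'b::real_normed_vector) \<Rightarrow> bool" where
  "smooth_on U f \<longleftrightarrow> (\<forall>vs. (fold (\<lambda>v g. dd g v) vs f) differentiable_on U)"

text \<open>C-component of gamma: gamma_C(X) = (dA^i_jk(X) + g i j k l * dx^l(X)) dx^j (x) dx^k (x) d/dx^i,
  where g i j k l = gamma^i_jkl (functions on C).\<close>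
definition gammaC :: "('n \<Rightarrow> 'n \<Rightarrow> 'n \<Rightarrow> 'n \<Rightarrow> 'n::finite cpt \<Rightarrow> real) \<Rightarrow> 'n cpt \<Rightarrow> 'n cpt \<Rightarrow> real^'n^'n^'n" where
  "gammaC g P X = (\<chi> i j k. snd X $ i $ j $ k + (\<Sum>l\<in>UNIV. g i j k l P * fst X $ l))"

text \<open>tilde gamma_C(X,Y) = c11((p_C)_* Y (x) gamma_C(X)) - c11((p_C)_* X (x) gamma_C(Y)).\<close>
definition gammaC_tilde :: "('n \<Rightarrow> 'n \<Rightarrow> 'n \<Rightarrow> 'n \<Rightarrow> 'n::finite cpt \<Rightarrow> real) \<Rightarrow> 'n cpt \<Rightarrow> 'n cpt \<Rightarrow> 'n cpt \<Rightarrow> real^'n^'n" where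
  "gammaC_tilde g P X Y = (\<chi> i k. (\<Sum>j\<in>UNIV. fst Y $ j * gammaC g P X $ i $ j $ k
                                          - fst X $ j * gammaC g P Y $ i $ j $ k))"

definition endo_apply :: "real^'n^'n \<Rightarrow> real^'n \<Rightarrow> real^'n::finite" where
  "endo_apply T w = (\<chi> i. \<Sum>k\<in>UNIV. T $ i $ k * w $ k)"

text \<open>Canonical covariant derivative nabla^(1) on p_C^* TN:
  (nabla_X xi)(Gamma_x) = X(xi^i) d/dx^i + xi^k nabla^{Gamma_x}_{(p_C)_* X} d/dx^k,
  with nabla^{Gamma}_{d/dx^j} d/dx^k = Gamma^i_jk d/dx^i.\<close>
definition nabla1 :: "('n::finite cpt \<Rightarrow> 'n cpt) \<Rightarrow> ('n cpt \<Rightarrow> real^'n) \<Rightarrow> 'n cpt \<Rightarrow> real^'n" where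
  "nabla1 X xi = (\<lambda>P. dd xi (X P) P
      + (\<chi> i. \<Sum>j\<in>UNIV. \<Sum>k\<in>UNIV. snd P $ i $ j $ k * fst (X P) $ j * xi P $ k))"

definition lie_bracket :: "('a::real_normed_vector \<Rightarrow> 'a) \<Rightarrow> ('a \<Rightarrow> 'a) \<Rightarrow> 'a \<Rightarrow> 'a" where
  "lie_bracket X Y = (\<lambda>P. dd Y (X P) P - dd X (Y P) P)"

definition curv1 :: "('n::finite cpt \<Rightarrow> 'n cpt) \<Rightarrow> ('n cpt \<Rightarrow> 'n cpt) \<Rightarrow> ('n cpt \<Rightarrow> real^'n) \<Rightarrow> 'n cpt \<Rightarrow> real^'n" where
  "curv1 X Y xi = (\<lambda>P. nabla1 X (nabla1 Y xi) P - nabla1 Y (nabla1 X xi) P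
                       - nabla1 (lie_bracket X Y) xi P)"

text \<open>Canonical covariant derivative nabla^(2) on p_C^*(wedge^2 T*N (x) TN) (applied to sections
  S with S $ i $ j $ k = S(d/dx^j, d/dx^k)^i), using the connection induced by Gamma_x on
  tensors: (nabla_v S)^i_jk = v(S^i_jk) + v^l (Gamma^i_lm S^m_jk - Gamma^m_lj S^i_mk - Gamma^m_lk S^i_jm).\<close>
definition nabla2 :: "('n::finite cpt \<Rightarrow> real^'n^'n^'n) \<Rightarrow> 'n cpt \<Rightarrow> 'n cpt \<Rightarrow> real^'n^'n^'n" where
  "nabla2 S P X = (\<chi> i j k. frechet_derivative (\<lambda>Q. S Q $ i $ j $ k) (at P) X
      + (\<Sum>l\<in>UNIV. \<Sum>m\<in>UNIV. fst X $ l *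
           (snd P $ i $ l $ m * S P $ m $ j $ k - snd P $ m $ l $ j * S P $ i $ m $ k
            - snd P $ m $ l $ k * S P $ i $ j $ m)))"

definition tauN :: "'n::finite cpt \<Rightarrow> real^'n^'n^'n" where
  "tauN P = (\<chi> i j k. snd P $ i $ j $ k - snd P $ i $ k $ j)"

definition alt12 :: "real^'n^'n^'n \<Rightarrow> real^'n^'n^'n::finite" where
  "alt12 T = (\<chi> i j k. T $ i $ j $ k - T $ i $ k $ j)"

end

theory Submission
  imports Defs
begin

text \<open>On the bundle of connections the Christoffel symbols are the fibre coordinates \<open>A\<close> themselves,
  so the covariant derivatives \<open>\<nabla>\<^sup>(\<^sup>1\<^sup>)\<close> and \<open>\<nabla>\<^sup>(\<^sup>2\<^sup>)\<close> are given by explicit polynomial formulas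
  in \<open>A\<close> and \<open>dA\<close>. Using the symmetry of second derivatives, the curvature of \<open>\<nabla>\<^sup>(\<^sup>1\<^sup>)\<close> is the
  tensor \<open>dA(X)(Y,\<xi>) - dA(Y)(X,\<xi>) + [A(X), A(Y)]\<xi>\<close>; its \<open>dA\<close>-part cancels against the \<open>dA\<close>-part
  of \<open>\<gamma>\<^sub>C\<close>, and what remains of \<open>\<tilde>\<gamma>\<^sub>C - R\<close> is a trilinear form in \<open>(p\<^sub>C)\<^sub>*X, (p\<^sub>C)\<^sub>*Y, \<xi>\<close>.
  Likewise \<open>alt\<^sub>1\<^sub>2 \<circ> \<gamma>\<^sub>C - \<nabla>\<^sup>(\<^sup>2\<^sup>)\<tau>\<^sub>N\<close> is linear in \<open>(p\<^sub>C)\<^sub>*X\<close>. Both equations therefore hold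
  for all arguments iff the coefficients of these forms vanish, which are the stated equations.\<close>

lemma smooth_on_imp_differentiable:
  assumes "smooth_on U f" "open U" "Q \<in> U"
  shows "f differentiable (at Q)"
proof -
  have "f differentiable_on U"
    using assms(1) unfolding smooth_on_def by (metis fold_simps(1) id_apply)
  then show ?thesis
    using assms(2,3) by (simp add: differentiable_on_eq_differentiable_at)
qed

lemma smooth_on_dd: "smooth_on U f \<Longrightarrow> smooth_on U (dd f v)"
  unfolding smooth_on_def by (metis fold_simps(2))

lemma dd_const: "dd (\<lambda>_. c) v = (\<lambda>_. 0)"
  unfolding dd_def by (simp add: fun_eq_iff frechet_derivative_const)

lemma smooth_on_const: "smooth_on U (\<lambda>_. c)"
proof -
  have "\<exists>c'. fold (\<lambda>v g. dd g v) vs (\<lambda>_. c) = (\<lambda>_. c')" for vs :: "'a list" and c :: 'b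
    by (induction vs arbitrary: c) (auto simp: dd_const)
  then show ?thesis
    unfolding smooth_on_def by (metis differentiable_on_const)
qed

lemma has_derivative_dd: "f differentiable (at P) \<Longrightarrow> (f has_derivative (\<lambda>v. dd f v P)) (at P)"
  unfolding dd_def by (simp add: frechet_derivative_works)

lemma dd_eq_derivative: "(f has_derivative f') (at P) \<Longrightarrow> dd f v P = f' v"
  unfolding dd_def by (metis frechet_derivative_at)

lemma linear_dd: "f differentiable (at P) \<Longrightarrow> linear (\<lambda>v. dd f v P)"
  using has_derivative_dd has_derivative_linear by blast

lemma dd_basis_expansion:
  fixes f :: "'a::euclidean_space \<Rightarrow> 'b::real_normed_vector"
  assumes "f differentiable (at P)"
  shows "dd f v P = (\<Sum>b\<in>Basis. (v \<bullet> b) *\<^sub>R dd f b P)"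
proof -
  have "dd f v P = dd f (\<Sum>b\<in>Basis. (v \<bullet> b) *\<^sub>R b) P"
    by (simp add: euclidean_representation)
  also have "\<dots> = (\<Sum>b\<in>Basis. (v \<bullet> b) *\<^sub>R dd f b P)"
    by (simp add: linear_sum[OF linear_dd[OF assms]] linear_cmul[OF linear_dd[OF assms]] o_def)
  finally show ?thesis .
qed

lemma has_derivative_vec_nth:
  "(f has_derivative f') F \<Longrightarrow> ((\<lambda>x. f x $ i) has_derivative (\<lambda>h. f' h $ i)) F"
  by (rule bounded_linear.has_derivative[OF bounded_linear_vec_nth])

lemma has_derivative_vec_lambda:
  fixes f :: "'i::finite \<Rightarrow> 'a::real_normed_vector \<Rightarrow> real"
  assumes "\<And>i. (f i has_derivative f' i) F"
  shows "((\<lambda>x. \<chi> i. f i x) has_derivative (\<lambda>h. \<chi> i. f' i h)) F"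
proof -
  have expand: "(\<chi> i. c i) = (\<Sum>i\<in>UNIV. c i *\<^sub>R axis i (1::real))" for c
    using basis_expansion[of "\<chi> i. c i"] by (simp add: scalar_mult_eq_scaleR)
  show ?thesis
    unfolding expand by (intro has_derivative_sum has_derivative_scaleR_left assms)
qed

lemma has_real_derivative_dd_along_line:
  fixes f :: "'a::real_normed_vector \<Rightarrow> real^'n::finite"
  assumes "f differentiable (at (x + s *\<^sub>R v))"
  shows "((\<lambda>t. f (x + t *\<^sub>R v) $ i) has_real_derivative dd f v (x + s *\<^sub>R v) $ i) (at s)"
proof -
  have line: "((\<lambda>t. x + t *\<^sub>R v) has_derivative (\<lambda>t. t *\<^sub>R v)) (at s)"
    by (auto intro!: derivative_eq_intros)
  have "((\<lambda>t. f (x + t *\<^sub>R v) $ i) has_derivative (\<lambda>t. dd f (t *\<^sub>R v) (x + s *\<^sub>R v) $ i)) (at s)"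
    using has_derivative_vec_nth[OF diff_chain_at[OF line has_derivative_dd[OF assms]]]
    by (simp add: o_def)
  moreover have "(\<lambda>t. dd f (t *\<^sub>R v) (x + s *\<^sub>R v) $ i) = (*) (dd f v (x + s *\<^sub>R v) $ i)"
    using linear_cmul[OF linear_dd[OF assms]] by (simp add: fun_eq_iff mult.commute)
  ultimately show ?thesis
    unfolding has_field_derivative_def by simp
qed

lemma second_difference_mean_value:
  fixes f :: "'a::real_normed_vector \<Rightarrow> real^'n::finite"
  assumes "0 < h"
    and rectangle: "\<And>s t. 0 \<le> s \<Longrightarrow> s \<le> h \<Longrightarrow> 0 \<le> t \<Longrightarrow> t \<le> h \<Longrightarrow> P + s *\<^sub>R b + t *\<^sub>R c \<in> U"
    and df: "\<And>Q. Q \<in> U \<Longrightarrow> f differentiable (at Q)"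
    and ddf: "\<And>Q. Q \<in> U \<Longrightarrow> dd f b differentiable (at Q)"
  obtains s t where "0 < s" "s < h" "0 < t" "t < h"
    "f (P + h *\<^sub>R b + h *\<^sub>R c) $ i - f (P + h *\<^sub>R b) $ i - f (P + h *\<^sub>R c) $ i + f P $ i
       = h * h * dd (dd f b) c (P + s *\<^sub>R b + t *\<^sub>R c) $ i"
proof -
  define pt where "pt s t = P + s *\<^sub>R b + t *\<^sub>R c" for s t
  have along_b: "pt s t = (P + t *\<^sub>R c) + s *\<^sub>R b" and along_c: "pt s t = (P + s *\<^sub>R b) + t *\<^sub>R c" for s t
    by (simp_all add: pt_def algebra_simps)
  have in_U: "pt s t \<in> U" if "0 \<le> s" "s \<le> h" "0 \<le> t" "t \<le> h" for s t
    using rectangle[OF that] by (simp add: pt_def)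
  have along_b_deriv: "((\<lambda>s. f (pt s t) $ i) has_real_derivative dd f b (pt x t) $ i) (at x)"
    if "0 \<le> x" "x \<le> h" "0 \<le> t" "t \<le> h" for x t
    unfolding along_b by (rule has_real_derivative_dd_along_line)
      (use in_U[OF that] df along_b in auto)
  have "((\<lambda>s. f (pt s h) $ i - f (pt s 0) $ i) has_real_derivative
      dd f b (pt x h) $ i - dd f b (pt x 0) $ i) (at x)" if "0 \<le> x" "x \<le> h" for x
    using that \<open>0 < h\<close> by (intro DERIV_diff along_b_deriv) auto
  from MVT2[OF \<open>0 < h\<close> this] obtain s where s: "0 < s" "s < h"
    and mvt_b: "(f (pt h h) $ i - f (pt h 0) $ i) - (f (pt 0 h) $ i - f (pt 0 0) $ i)
      = (h - 0) * (dd f b (pt s h) $ i - dd f b (pt s 0) $ i)"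
    by blast
  have "((\<lambda>t. dd f b (pt s t) $ i) has_real_derivative dd (dd f b) c (pt s x) $ i) (at x)"
    if "0 \<le> x" "x \<le> h" for x
    unfolding along_c by (rule has_real_derivative_dd_along_line)
      (use in_U[of s x] that s ddf along_c in auto)
  from MVT2[OF \<open>0 < h\<close> this] obtain t where t: "0 < t" "t < h"
    and mvt_c: "dd f b (pt s h) $ i - dd f b (pt s 0) $ i = (h - 0) * dd (dd f b) c (pt s t) $ i"
    by blast
  show ?thesis
    by (rule that[OF s t]) (use mvt_b mvt_c in \<open>simp add: pt_def\<close>)
qed

lemma dist_rectangle_less:
  fixes b c :: "'a::real_normed_vector"
  assumes "0 < d" "0 \<le> s" "s \<le> d / (norm b + norm c + 1)" "0 \<le> t" "t \<le> d / (norm b + norm c + 1)"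
  shows "dist (P + s *\<^sub>R b + t *\<^sub>R c) P < d"
proof -
  define h where "h = d / (norm b + norm c + 1)"
  have norms_pos: "0 < norm b + norm c + 1"
    by (simp add: add_nonneg_pos)
  have "0 < h"
    using assms(1) norms_pos by (simp add: h_def)
  have "dist (P + s *\<^sub>R b + t *\<^sub>R c) P \<le> s * norm b + t * norm c"
    using norm_triangle_ineq[of "s *\<^sub>R b" "t *\<^sub>R c"] assms by (simp add: dist_norm)
  also have "\<dots> \<le> h * norm b + h * norm c"
    using assms by (intro add_mono mult_right_mono) (auto simp: h_def)
  also have "\<dots> < h * (norm b + norm c + 1)"
    using \<open>0 < h\<close> by (simp add: algebra_simps)
  also have "\<dots> = d"
    using norms_pos by (simp add: h_def)
  finally show ?thesis .
qed

text \<open>Schwarz's theorem: by the mean value theorem applied in both orders, the second difference of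
  \<open>f\<close> over a small rectangle at \<open>P\<close> is \<open>h\<^sup>2\<close> times either mixed derivative at some point of the
  rectangle; continuity of the mixed derivatives at \<open>P\<close> then makes them agree.\<close>
lemma dd_dd_commute_component:
  fixes f :: "'a::real_normed_vector \<Rightarrow> real^'n::finite"
  assumes "open U" "P \<in> U"
    and df: "\<And>Q. Q \<in> U \<Longrightarrow> f differentiable (at Q)"
    and ddb: "\<And>Q. Q \<in> U \<Longrightarrow> dd f b differentiable (at Q)"
    and ddc: "\<And>Q. Q \<in> U \<Longrightarrow> dd f c differentiable (at Q)"
    and cont_bc: "continuous (at P) (\<lambda>Q. dd (dd f b) c Q $ i)"
    and cont_cb: "continuous (at P) (\<lambda>Q. dd (dd f c) b Q $ i)"
  shows "dd (dd f b) c P $ i = dd (dd f c) b P $ i"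
proof -
  have "\<bar>dd (dd f b) c P $ i - dd (dd f c) b P $ i\<bar> \<le> e" if "0 < e" for e
  proof -
    obtain d1 where "d1 > 0" and d1: "\<And>Q. dist Q P < d1 \<Longrightarrow> \<bar>dd (dd f b) c Q $ i - dd (dd f b) c P $ i\<bar> < e/2"
      using cont_bc \<open>0 < e\<close> unfolding continuous_at_eps_delta dist_real_def by (meson half_gt_zero)
    obtain d2 where "d2 > 0" and d2: "\<And>Q. dist Q P < d2 \<Longrightarrow> \<bar>dd (dd f c) b Q $ i - dd (dd f c) b P $ i\<bar> < e/2"
      using cont_cb \<open>0 < e\<close> unfolding continuous_at_eps_delta dist_real_def by (meson half_gt_zero)
    obtain d3 where "d3 > 0" "ball P d3 \<subseteq> U"
      using assms(1,2) open_contains_ball by blast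
    define d where "d = min d1 (min d2 d3)"
    define h where "h = d / (norm b + norm c + 1)"
    have "0 < d"
      using \<open>d1 > 0\<close> \<open>d2 > 0\<close> \<open>d3 > 0\<close> by (simp add: d_def)
    then have "0 < h"
      by (simp add: h_def add_nonneg_pos)
    have near: "dist (P + s *\<^sub>R b + t *\<^sub>R c) P < d" if "0 \<le> s" "s \<le> h" "0 \<le> t" "t \<le> h" for s t
      using dist_rectangle_less[OF \<open>0 < d\<close>] that by (simp add: h_def)
    have rect: "P + s *\<^sub>R b + t *\<^sub>R c \<in> U" if "0 \<le> s" "s \<le> h" "0 \<le> t" "t \<le> h" for s t
      using near[OF that] \<open>ball P d3 \<subseteq> U\<close> by (auto simp: d_def dist_commute)
    obtain s1 t1 where st1: "0 < s1" "s1 < h" "0 < t1" "t1 < h"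
      and diff_bc: "f (P + h *\<^sub>R b + h *\<^sub>R c) $ i - f (P + h *\<^sub>R b) $ i - f (P + h *\<^sub>R c) $ i + f P $ i
        = h * h * dd (dd f b) c (P + s1 *\<^sub>R b + t1 *\<^sub>R c) $ i"
      using second_difference_mean_value[OF \<open>0 < h\<close> rect df ddb] by blast
    have rect': "P + s *\<^sub>R c + t *\<^sub>R b \<in> U" if "0 \<le> s" "s \<le> h" "0 \<le> t" "t \<le> h" for s t
      using rect[of t s] that by (simp add: add_ac)
    obtain s2 t2 where st2: "0 < s2" "s2 < h" "0 < t2" "t2 < h"
      and diff_cb: "f (P + h *\<^sub>R c + h *\<^sub>R b) $ i - f (P + h *\<^sub>R c) $ i - f (P + h *\<^sub>R b) $ i + f P $ i
        = h * h * dd (dd f c) b (P + s2 *\<^sub>R c + t2 *\<^sub>R b) $ i"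
      using second_difference_mean_value[OF \<open>0 < h\<close> rect' df ddc] by blast
    have corner: "P + h *\<^sub>R c + h *\<^sub>R b = P + h *\<^sub>R b + h *\<^sub>R c"
      by (simp add: add_ac)
    have "h * h * dd (dd f b) c (P + s1 *\<^sub>R b + t1 *\<^sub>R c) $ i
        = h * h * dd (dd f c) b (P + s2 *\<^sub>R c + t2 *\<^sub>R b) $ i"
      using diff_bc diff_cb unfolding corner by linarith
    then have equal: "dd (dd f b) c (P + s1 *\<^sub>R b + t1 *\<^sub>R c) $ i = dd (dd f c) b (P + s2 *\<^sub>R c + t2 *\<^sub>R b) $ i"
      using \<open>0 < h\<close> by simp
    have "\<bar>dd (dd f b) c (P + s1 *\<^sub>R b + t1 *\<^sub>R c) $ i - dd (dd f b) c P $ i\<bar> < e/2"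
      using d1 near[of s1 t1] st1 by (simp add: d_def)
    moreover have "\<bar>dd (dd f c) b (P + s2 *\<^sub>R c + t2 *\<^sub>R b) $ i - dd (dd f c) b P $ i\<bar> < e/2"
      using d2 near[of t2 s2] st2 by (simp add: d_def add_ac)
    ultimately show ?thesis
      unfolding equal by linarith
  qed
  then show ?thesis
    using dense_eq0_I[of "dd (dd f b) c P $ i - dd (dd f c) b P $ i"] by simp
qed

lemma smooth_on_dd_dd_commute:
  fixes f :: "'a::real_normed_vector \<Rightarrow> real^'n::finite"
  assumes "open U" "P \<in> U" "smooth_on U f"
  shows "dd (dd f b) c P = dd (dd f c) b P"
proof -
  have diff: "\<And>v Q. Q \<in> U \<Longrightarrow> dd f v differentiable (at Q)"
    using smooth_on_imp_differentiable[OF smooth_on_dd[OF assms(3)] assms(1)] .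
  have cont: "continuous (at P) (\<lambda>Q. dd (dd f v) w Q $ i)" for v w i
    using smooth_on_imp_differentiable[OF smooth_on_dd[OF smooth_on_dd[OF assms(3)]] assms(1,2)]
    by (intro continuous_component differentiable_imp_continuous_within)
  show ?thesis
    by (subst vec_eq_iff, intro allI dd_dd_commute_component[OF assms(1,2)
          smooth_on_imp_differentiable[OF assms(3,1)] diff diff cont cont])
qed

lemma has_derivative_dd_along:
  fixes xi :: "'a::euclidean_space \<Rightarrow> real^'n::finite"
  assumes "open U" "P \<in> U" "smooth_on U xi" and dY: "(Y has_derivative Y') (at P)"
  shows "((\<lambda>Q. dd xi (Y Q) Q) has_derivative (\<lambda>w. dd (dd xi (Y P)) w P + dd xi (Y' w) P)) (at P)"
proof -
  have ddxi: "(dd xi b has_derivative (\<lambda>w. dd (dd xi b) w P)) (at P)" for b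
    using has_derivative_dd[OF smooth_on_imp_differentiable[OF smooth_on_dd[OF assms(3)] assms(1,2)]] .
  have expand: "dd xi v Q = (\<Sum>b\<in>Basis. (v \<bullet> b) *\<^sub>R dd xi b Q)" if "Q \<in> U" for v Q
    using dd_basis_expansion[OF smooth_on_imp_differentiable[OF assms(3,1) that]] .
  have dd_dd_expand: "dd (dd xi v) w P = (\<Sum>b\<in>Basis. (v \<bullet> b) *\<^sub>R dd (dd xi b) w P)" for v w
  proof -
    have "((\<lambda>Q. \<Sum>b\<in>Basis. (v \<bullet> b) *\<^sub>R dd xi b Q) has_derivative
        (\<lambda>w. \<Sum>b\<in>Basis. (v \<bullet> b) *\<^sub>R dd (dd xi b) w P)) (at P)"
      by (intro has_derivative_sum has_derivative_scaleR_right ddxi)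
    then have "(dd xi v has_derivative (\<lambda>w. \<Sum>b\<in>Basis. (v \<bullet> b) *\<^sub>R dd (dd xi b) w P)) (at P)"
      by (rule has_derivative_transform_within_open[OF _ assms(1,2)]) (rule expand[symmetric])
    then show ?thesis
      by (rule dd_eq_derivative)
  qed
  have "((\<lambda>Q. \<Sum>b\<in>Basis. (Y Q \<bullet> b) *\<^sub>R dd xi b Q) has_derivative
      (\<lambda>w. \<Sum>b\<in>Basis. (Y P \<bullet> b) *\<^sub>R dd (dd xi b) w P + (Y' w \<bullet> b) *\<^sub>R dd xi b P)) (at P)"
    by (intro has_derivative_sum has_derivative_scaleR has_derivative_inner_left dY ddxi)
  then have "((\<lambda>Q. dd xi (Y Q) Q) has_derivative
      (\<lambda>w. \<Sum>b\<in>Basis. (Y P \<bullet> b) *\<^sub>R dd (dd xi b) w P + (Y' w \<bullet> b) *\<^sub>R dd xi b P)) (at P)"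
    by (rule has_derivative_transform_within_open[OF _ assms(1,2)]) (rule expand[symmetric])
  then show ?thesis
    by (simp add: sum.distrib flip: dd_dd_expand expand[OF assms(2)])
qed

text \<open>As the fibre
  coordinates \<open>A\<close> are linear, \<open>conn_apply W v w\<close> for a tangent vector \<open>W\<close> is \<open>dA(W)\<close> applied
  to \<open>(v, w)\<close>.\<close>
definition conn_apply :: "'n::finite cpt \<Rightarrow> 'n cpt \<Rightarrow> real^'n \<Rightarrow> real^'n" where
  "conn_apply P v w = (\<chi> i. \<Sum>j\<in>UNIV. \<Sum>k\<in>UNIV. snd P $ i $ j $ k * fst v $ j * w $ k)"

lemma conn_apply_add_right: "conn_apply P v (w + w') = conn_apply P v w + conn_apply P v w'"
  by (simp add: conn_apply_def vec_eq_iff algebra_simps sum.distrib)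

lemma conn_apply_diff_middle: "conn_apply P (v - v') w = conn_apply P v w - conn_apply P v' w"
  by (simp add: conn_apply_def vec_eq_iff algebra_simps sum_subtractf)

lemma has_derivative_conn_apply:
  assumes "(Y has_derivative Y') (at P)" "(xi has_derivative xi') (at P)"
  shows "((\<lambda>Q. conn_apply Q (Y Q) (xi Q)) has_derivative
     (\<lambda>w. conn_apply w (Y P) (xi P) + conn_apply P (Y' w) (xi P) + conn_apply P (Y P) (xi' w))) (at P)"
proof -
  have dA: "((\<lambda>Q. snd Q $ i $ j $ k) has_derivative (\<lambda>w. snd w $ i $ j $ k)) (at P)" for i j k
    by (intro has_derivative_vec_nth has_derivative_snd[OF has_derivative_ident])
  have dY: "((\<lambda>Q. fst (Y Q) $ j) has_derivative (\<lambda>w. fst (Y' w) $ j)) (at P)" for j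
    by (intro has_derivative_vec_nth has_derivative_fst assms(1))
  have dxi: "((\<lambda>Q. xi Q $ k) has_derivative (\<lambda>w. xi' w $ k)) (at P)" for k
    by (rule has_derivative_vec_nth[OF assms(2)])
  show ?thesis
    unfolding conn_apply_def
    by (rule has_derivative_eq_rhs, rule has_derivative_vec_lambda,
        (rule has_derivative_sum has_derivative_mult dA dY dxi)+)
      (simp add: fun_eq_iff vec_eq_iff sum.distrib algebra_simps)
qed

lemma nabla1_conv: "nabla1 X xi = (\<lambda>P. dd xi (X P) P + conn_apply P (X P) (xi P))"
  by (simp add: nabla1_def conn_apply_def fun_eq_iff)

lemma has_derivative_nabla1:
  assumes "open U" "P \<in> U" "smooth_on U Y" "smooth_on U xi"
  shows "(nabla1 Y xi has_derivative (\<lambda>w. dd (dd xi (Y P)) w P + dd xi (dd Y w P) P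
      + (conn_apply w (Y P) (xi P) + conn_apply P (dd Y w P) (xi P) + conn_apply P (Y P) (dd xi w P)))) (at P)"
proof -
  have dY: "(Y has_derivative (\<lambda>w. dd Y w P)) (at P)"
    using has_derivative_dd[OF smooth_on_imp_differentiable[OF assms(3,1,2)]] .
  have dxi: "(xi has_derivative (\<lambda>w. dd xi w P)) (at P)"
    using has_derivative_dd[OF smooth_on_imp_differentiable[OF assms(4,1,2)]] .
  show ?thesis
    unfolding nabla1_conv
    by (rule has_derivative_add[OF has_derivative_dd_along[OF assms(1,2,4) dY]
          has_derivative_conn_apply[OF dY dxi]])
qed

definition curv_coord :: "'n::finite cpt \<Rightarrow> 'n cpt \<Rightarrow> 'n cpt \<Rightarrow> real^'n \<Rightarrow> real^'n" where
  "curv_coord P x y w = conn_apply x y w - conn_apply y x w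
      + conn_apply P x (conn_apply P y w) - conn_apply P y (conn_apply P x w)"

text \<open>The second derivatives of \<open>\<xi>\<close> cancel by the symmetry of second derivatives.\<close>
lemma curv1_conv:
  assumes "open U" "P \<in> U" "smooth_on U X" "smooth_on U Y" "smooth_on U xi"
  shows "curv1 X Y xi P = curv_coord P (X P) (Y P) (xi P)"
proof -
  have lin: "linear (\<lambda>v. dd xi v P)"
    using linear_dd[OF smooth_on_imp_differentiable[OF assms(5,1,2)]] .
  have "dd (dd xi (Y P)) (X P) P = dd (dd xi (X P)) (Y P) P"
    using assms(1,2,5) by (rule smooth_on_dd_dd_commute)
  moreover have "dd xi (v - v') P = dd xi v P - dd xi v' P" for v v'
    using linear_diff[OF lin] by simp
  ultimately show ?thesis
    unfolding curv1_def lie_bracket_def curv_coord_def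
    using dd_eq_derivative[OF has_derivative_nabla1[OF assms(1,2,4,5)]]
      dd_eq_derivative[OF has_derivative_nabla1[OF assms(1,2,3,5)]]
    by (simp add: nabla1_conv conn_apply_add_right conn_apply_diff_middle algebra_simps)
qed

definition trilinear :: "('n::finite \<Rightarrow> 'n \<Rightarrow> 'n \<Rightarrow> real) \<Rightarrow> real^'n \<Rightarrow> real^'n \<Rightarrow> real^'n \<Rightarrow> real" where
  "trilinear c u v w = (\<Sum>l\<in>UNIV. \<Sum>j\<in>UNIV. \<Sum>k\<in>UNIV. c l j k * u $ l * v $ j * w $ k)"

lemma sum_mult_axis: "(\<Sum>l\<in>UNIV. f l * axis i (1::real) $ l) = f i"
  by (simp add: axis_def of_bool_def[symmetric])

lemma trilinear_axis: "trilinear c (axis l 1) (axis j 1) (axis k 1) = c l j k"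
  by (simp add: trilinear_def sum_mult_axis flip: sum_distrib_right)

lemma trilinear_swap: "trilinear c v u w = trilinear (\<lambda>l j k. c j l k) u v w"
  unfolding trilinear_def by (subst sum.swap) (simp add: mult_ac)

lemma sum_rotate3:
  "(\<Sum>a\<in>A. \<Sum>b\<in>B. \<Sum>c\<in>C. f a b c) = (\<Sum>b\<in>B. \<Sum>c\<in>C. \<Sum>a\<in>A. f a b c)"
proof -
  have "(\<Sum>a\<in>A. \<Sum>b\<in>B. \<Sum>c\<in>C. f a b c) = (\<Sum>b\<in>B. \<Sum>a\<in>A. \<Sum>c\<in>C. f a b c)"
    by (rule sum.swap)
  also have "\<dots> = (\<Sum>b\<in>B. \<Sum>c\<in>C. \<Sum>a\<in>A. f a b c)"
    by (rule sum.cong[OF refl], rule sum.swap)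
  finally show ?thesis .
qed

lemma conn_apply_conn_apply_component:
  "conn_apply P x (conn_apply P y w) $ i
     = trilinear (\<lambda>l j k. \<Sum>m\<in>UNIV. snd P $ i $ l $ m * snd P $ m $ j $ k) (fst x) (fst y) w"
  by (simp add: trilinear_def conn_apply_def sum_distrib_left sum_distrib_right mult_ac)
    (rule sum.cong[OF refl], rule sum_rotate3)

lemma sum_reverse3:
  "(\<Sum>a\<in>A. \<Sum>b\<in>B. \<Sum>c\<in>C. f a b c) = (\<Sum>c\<in>C. \<Sum>b\<in>B. \<Sum>a\<in>A. f a b c)"
  by (subst sum_rotate3) (rule sum.swap)

lemma endo_apply_gammaC_tilde_component:
  "endo_apply (gammaC_tilde g P x y) w $ i = conn_apply x y w $ i - conn_apply y x w $ i
     + trilinear (\<lambda>l j k. g i j k l P) (fst x) (fst y) w - trilinear (\<lambda>l j k. g i j k l P) (fst y) (fst x) w"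
proof -
  have "endo_apply (gammaC_tilde g P x y) w $ i
      = (\<Sum>k\<in>UNIV. \<Sum>j\<in>UNIV. snd x $ i $ j $ k * fst y $ j * w $ k)
      - (\<Sum>k\<in>UNIV. \<Sum>j\<in>UNIV. snd y $ i $ j $ k * fst x $ j * w $ k)
      + (\<Sum>k\<in>UNIV. \<Sum>j\<in>UNIV. \<Sum>l\<in>UNIV. g i j k l P * fst x $ l * fst y $ j * w $ k)
      - (\<Sum>k\<in>UNIV. \<Sum>j\<in>UNIV. \<Sum>l\<in>UNIV. g i j k l P * fst y $ l * fst x $ j * w $ k)"
    by (simp add: endo_apply_def gammaC_tilde_def gammaC_def algebra_simps sum_distrib_left
        sum_distrib_right sum_subtractf sum.distrib)
  moreover have "(\<Sum>k\<in>UNIV. \<Sum>j\<in>UNIV. snd v $ i $ j $ k * fst v' $ j * w $ k) = conn_apply v v' w $ i"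
    for v v'
    unfolding conn_apply_def vec_lambda_beta by (rule sum.swap)
  moreover have "(\<Sum>k\<in>UNIV. \<Sum>j\<in>UNIV. \<Sum>l\<in>UNIV. g i j k l P * u $ l * u' $ j * w $ k)
      = trilinear (\<lambda>l j k. g i j k l P) u u' w" for u u'
    unfolding trilinear_def by (rule sum_reverse3)
  ultimately show ?thesis
    by simp
qed

lemma gammaC_tilde_minus_curv_coord_component:
  "(endo_apply (gammaC_tilde g P x y) w - curv_coord P x y w) $ i
     = trilinear (\<lambda>l j k. (g i j k l P - g i l k j P)
          - (\<Sum>m\<in>UNIV. snd P $ i $ l $ m * snd P $ m $ j $ k - snd P $ i $ j $ m * snd P $ m $ l $ k))
         (fst x) (fst y) w"
  by (simp add: curv_coord_def endo_apply_gammaC_tilde_component conn_apply_conn_apply_component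
      trilinear_swap[of _ "fst y" "fst x"])
    (simp add: trilinear_def sum_subtractf left_diff_distrib)

lemma curvature_equation_iff:
  fixes g :: "'n \<Rightarrow> 'n \<Rightarrow> 'n \<Rightarrow> 'n \<Rightarrow> 'n::finite cpt \<Rightarrow> real"
  assumes "open U"
  shows "(\<forall>X Y xi. smooth_on U X \<longrightarrow> smooth_on U Y \<longrightarrow> smooth_on U xi \<longrightarrow>
             (\<forall>P\<in>U. endo_apply (gammaC_tilde g P (X P) (Y P)) (xi P) = curv1 X Y xi P))
    \<longleftrightarrow> (\<forall>P\<in>U. \<forall>h r s t. g h s t r P - g h r t s P
           = (\<Sum>m\<in>UNIV. snd P $ h $ r $ m * snd P $ m $ s $ t - snd P $ h $ s $ m * snd P $ m $ r $ t))"
    (is "?curvature \<longleftrightarrow> ?coordinates")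
proof
  assume ?curvature
  show ?coordinates
  proof (intro ballI allI)
    fix P h r s t
    assume "P \<in> U"
    define x :: "'n cpt" where "x = (axis r 1, 0)"
    define y :: "'n cpt" where "y = (axis s 1, 0)"
    define w :: "real^'n" where "w = axis t 1"
    have "endo_apply (gammaC_tilde g P x y) w = curv1 (\<lambda>_. x) (\<lambda>_. y) (\<lambda>_. w) P"
      using \<open>?curvature\<close>[rule_format, OF smooth_on_const[of U x] smooth_on_const[of U y]
          smooth_on_const[of U w] \<open>P \<in> U\<close>] .
    also have "\<dots> = curv_coord P x y w"
      by (rule curv1_conv[OF assms \<open>P \<in> U\<close> smooth_on_const smooth_on_const smooth_on_const])
    finally have "(endo_apply (gammaC_tilde g P x y) w - curv_coord P x y w) $ h = 0"
      by simp
    then show "g h s t r P - g h r t s P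
        = (\<Sum>m\<in>UNIV. snd P $ h $ r $ m * snd P $ m $ s $ t - snd P $ h $ s $ m * snd P $ m $ r $ t)"
      unfolding gammaC_tilde_minus_curv_coord_component x_def y_def w_def fst_conv trilinear_axis
      by simp
  qed
next
  assume ?coordinates
  show ?curvature
  proof (intro allI impI ballI)
    fix X Y :: "'n cpt \<Rightarrow> 'n cpt" and xi :: "'n cpt \<Rightarrow> real^'n" and P
    assume smooth: "smooth_on U X" "smooth_on U Y" "smooth_on U xi" and "P \<in> U"
    have "(\<lambda>l j k. (g i j k l P - g i l k j P)
          - (\<Sum>m\<in>UNIV. snd P $ i $ l $ m * snd P $ m $ j $ k - snd P $ i $ j $ m * snd P $ m $ l $ k))
        = (\<lambda>l j k. 0)" for i
      using \<open>?coordinates\<close> \<open>P \<in> U\<close> by simp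
    then have "(endo_apply (gammaC_tilde g P (X P) (Y P)) (xi P) - curv_coord P (X P) (Y P) (xi P)) $ i = 0"
      for i
      unfolding gammaC_tilde_minus_curv_coord_component by (simp add: trilinear_def)
    then show "endo_apply (gammaC_tilde g P (X P) (Y P)) (xi P) = curv1 X Y xi P"
      unfolding curv1_conv[OF assms \<open>P \<in> U\<close> smooth]
      by (simp only: vec_eq_iff vector_minus_component right_minus_eq) blast
  qed
qed

lemma frechet_derivative_torsion_coordinate:
  "frechet_derivative (\<lambda>Q. snd Q $ i $ j $ k - snd Q $ i $ k $ j) (at P) X
     = snd X $ i $ j $ k - snd X $ i $ k $ j"
proof -
  have "((\<lambda>Q. snd Q $ i $ j $ k - snd Q $ i $ k $ j) has_derivative
      (\<lambda>X. snd X $ i $ j $ k - snd X $ i $ k $ j)) (at P)"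
    by (rule has_derivative_diff; (rule has_derivative_vec_nth)+;
        rule has_derivative_snd[OF has_derivative_ident])
  then show ?thesis
    by (simp add: frechet_derivative_at[symmetric])
qed

lemma alt12_gammaC_minus_nabla2_tauN_component:
  "alt12 (gammaC g P X) $ i $ j $ k - nabla2 tauN P X $ i $ j $ k
     = (\<Sum>l\<in>UNIV. (g i j k l P - g i k j l P
          - (\<Sum>m\<in>UNIV. snd P $ i $ l $ m * (snd P $ m $ j $ k - snd P $ m $ k $ j)
              + snd P $ m $ l $ k * (snd P $ i $ m $ j - snd P $ i $ j $ m)
              + snd P $ m $ l $ j * (snd P $ i $ k $ m - snd P $ i $ m $ k))) * fst X $ l)"
  by (simp add: alt12_def gammaC_def nabla2_def tauN_def frechet_derivative_torsion_coordinate
      algebra_simps sum_subtractf sum.distrib sum_distrib_left sum_distrib_right)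

lemma torsion_equation_iff:
  fixes g :: "'n \<Rightarrow> 'n \<Rightarrow> 'n \<Rightarrow> 'n \<Rightarrow> 'n::finite cpt \<Rightarrow> real"
  shows "(\<forall>P\<in>U. \<forall>X. alt12 (gammaC g P X) = nabla2 tauN P X)
    \<longleftrightarrow> (\<forall>P\<in>U. \<forall>i j k l. g i j k l P - g i k j l P
          = (\<Sum>m\<in>UNIV. snd P $ i $ l $ m * (snd P $ m $ j $ k - snd P $ m $ k $ j)
              + snd P $ m $ l $ k * (snd P $ i $ m $ j - snd P $ i $ j $ m)
              + snd P $ m $ l $ j * (snd P $ i $ k $ m - snd P $ i $ m $ k)))"
    (is "?torsion \<longleftrightarrow> ?coordinates")
proof
  assume ?torsion
  show ?coordinates
  proof (intro ballI allI)
    fix P i j k l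
    assume "P \<in> U"
    have "alt12 (gammaC g P (axis l 1, 0)) $ i $ j $ k - nabla2 tauN P (axis l 1, 0) $ i $ j $ k = 0"
      using \<open>?torsion\<close> \<open>P \<in> U\<close> by simp
    then show "g i j k l P - g i k j l P
        = (\<Sum>m\<in>UNIV. snd P $ i $ l $ m * (snd P $ m $ j $ k - snd P $ m $ k $ j)
            + snd P $ m $ l $ k * (snd P $ i $ m $ j - snd P $ i $ j $ m)
            + snd P $ m $ l $ j * (snd P $ i $ k $ m - snd P $ i $ m $ k))"
      unfolding alt12_gammaC_minus_nabla2_tauN_component fst_conv sum_mult_axis by simp
  qed
next
  assume ?coordinates
  show ?torsion
  proof (intro ballI allI)
    fix P X
    assume "P \<in> U"
    have "alt12 (gammaC g P X) $ i $ j $ k - nabla2 tauN P X $ i $ j $ k = 0" for i j k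
      unfolding alt12_gammaC_minus_nabla2_tauN_component using \<open>?coordinates\<close> \<open>P \<in> U\<close> by simp
    then show "alt12 (gammaC g P X) = nabla2 tauN P X"
      by (simp only: vec_eq_iff right_minus_eq) blast
  qed
qed

theorem proposition4:
  fixes U :: "('n::finite) cpt set"
    and g :: "'n \<Rightarrow> 'n \<Rightarrow> 'n \<Rightarrow> 'n \<Rightarrow> 'n cpt \<Rightarrow> real"
  assumes "open U"
    and "\<forall>i j k l. smooth_on U (g i j k l)"
  shows "((\<forall>X Y xi. smooth_on U X \<longrightarrow> smooth_on U Y \<longrightarrow> smooth_on U xi \<longrightarrow>
             (\<forall>P\<in>U. endo_apply (gammaC_tilde g P (X P) (Y P)) (xi P) = curv1 X Y xi P))
          \<and> (\<forall>P\<in>U. \<forall>X. alt12 (gammaC g P X) = nabla2 tauN P X))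
     \<longleftrightarrow>
     (\<forall>P\<in>U. \<forall>h r s t.
        g h s t r P - g h r t s P
          = (\<Sum>m\<in>UNIV. snd P $ h $ r $ m * snd P $ m $ s $ t - snd P $ h $ s $ m * snd P $ m $ r $ t)
      \<and> g h r s t P - g h s r t P
          = (\<Sum>m\<in>UNIV. snd P $ h $ t $ m * (snd P $ m $ r $ s - snd P $ m $ s $ r)
                     + snd P $ m $ t $ s * (snd P $ h $ m $ r - snd P $ h $ r $ m)
                     + snd P $ m $ t $ r * (snd P $ h $ s $ m - snd P $ h $ m $ s)))"
  unfolding curvature_equation_iff[OF assms(1)] torsion_equation_iff
  by (simp only: ball_conj_distrib all_conj_distrib)

end
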